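(* Let $R$ be an integral domain in which every element is a finite sum of units. Let $\varphi$ be an automorphism of the additive group $(R,+)$ and $\Phi$ an automorphism of the multiplicative group $U(R)$ such that $\Phi(u)\varphi(1)=\varphi(u)$ for all $u\in U(R)$. Then $\Phi$ extends to a ring automorphism $\overline{\Phi}$ of $R$ (i.e. $\overline{\Phi}|_{U(R)}=\Phi$). *)

theory Defs
  imports Main
begin

end

theory Submission
  imports Defs HOL.Modules
begin

text \<open>
  Put \<open>c = \<phi> 1\<close>. Since \<open>\<phi> u = \<Phi> u * c\<close> for every unit \<open>u\<close> and every element is a sum of units,
  \<open>c\<close> divides every value of \<open>\<phi>\<close>, and \<open>\<Psi> x = \<phi> x / c\<close> is an additive bijection agreeing with \<open>\<Phi>\<close>
  on units. Both sides of \<open>\<Psi> (x * y) = \<Psi> x * \<Psi> y\<close> are biadditive and agree when \<open>x\<close> and \<open>y\<close>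
  are units, so they agree everywhere.
\<close>

lemma sums_of_units_induct [consumes 1, case_names zero add_unit]:
  fixes P :: "'a::comm_semiring_1 \<Rightarrow> bool"
  assumes "\<forall>x::'a. \<exists>us. (\<forall>u\<in>set us. u dvd 1) \<and> x = sum_list us"
    and zero: "P 0"
    and add_unit: "\<And>u x. u dvd 1 \<Longrightarrow> P x \<Longrightarrow> P (u + x)"
  shows "P x"
proof -
  obtain us where us: "\<forall>u\<in>set us. u dvd 1" "x = sum_list us"
    using assms(1) by blast
  have "P (sum_list us)"
    using us(1) by (induction us) (simp_all add: zero add_unit)
  then show ?thesis
    using us(2) by simp
qed

lemma additive_mult_if_mult_on_units:
  fixes f :: "'a::comm_ring_1 \<Rightarrow> 'a"
  assumes sums: "\<forall>x::'a. \<exists>us. (\<forall>u\<in>set us. u dvd 1) \<and> x = sum_list us"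
    and f: "additive f"
    and units: "\<And>u v. u dvd 1 \<Longrightarrow> v dvd 1 \<Longrightarrow> f (u * v) = f u * f v"
  shows "f (x * y) = f x * f y"
proof -
  have unit_left: "f (u * y) = f u * f y" if u: "u dvd 1" for u y
    using sums
  proof (induction y rule: sums_of_units_induct)
    case zero
    then show ?case by (simp add: additive.zero[OF f])
  next
    case (add_unit v y)
    then show ?case by (simp add: distrib_left additive.add[OF f] units u)
  qed
  from sums show ?thesis
  proof (induction x rule: sums_of_units_induct)
    case zero
    then show ?case by (simp add: additive.zero[OF f])
  next
    case (add_unit u x)
    then show ?case by (simp add: distrib_right additive.add[OF f] unit_left)
  qed
qed

lemma additive_surj_if_units_in_range:
  fixes f :: "'a::comm_ring_1 \<Rightarrow> 'a"
  assumes sums: "\<forall>x::'a. \<exists>us. (\<forall>u\<in>set us. u dvd 1) \<and> x = sum_list us"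
    and f: "additive f"
    and units: "{u. u dvd 1} \<subseteq> range f"
  shows "surj f"
proof -
  have "y \<in> range f" for y
    using sums
  proof (induction y rule: sums_of_units_induct)
    case zero
    show ?case using additive.zero[OF f] by (metis rangeI)
  next
    case (add_unit u y)
    then obtain v x where "u = f v" "y = f x"
      using units by blast
    then show ?case by (metis additive.add[OF f] rangeI)
  qed
  then show ?thesis by blast
qed

lemma unit_idempotent_eq_one:
  fixes e :: "'a::comm_monoid_mult"
  assumes "e dvd 1" and "e * e = e"
  shows "e = 1"
proof -
  obtain k where k: "1 = e * k"
    using assms(1) by (rule dvdE)
  have "e = e * (e * k)"
    using k by simp
  also have "\<dots> = e * k"
    using assms(2) by (simp add: mult.assoc[symmetric])
  finally show ?thesis
    using k by simp
qed

lemma image_one_dvd_additive: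
  fixes \<phi> \<Phi> :: "'a::comm_ring_1 \<Rightarrow> 'a"
  assumes sums: "\<forall>x::'a. \<exists>us. (\<forall>u\<in>set us. u dvd 1) \<and> x = sum_list us"
    and \<phi>: "additive \<phi>"
    and compat: "\<And>u. u dvd 1 \<Longrightarrow> \<Phi> u * \<phi> 1 = \<phi> u"
  shows "\<phi> 1 dvd \<phi> x"
  using sums
proof (induction x rule: sums_of_units_induct)
  case zero
  then show ?case by (simp add: additive.zero[OF \<phi>])
next
  case (add_unit u x)
  then have "\<phi> (u + x) = \<Phi> u * \<phi> 1 + \<phi> x"
    by (simp add: additive.add[OF \<phi>] compat)
  with add_unit show ?case by simp
qed

lemma obtain_additive_extension_of_units:
  fixes \<phi> \<Phi> :: "'a::idom \<Rightarrow> 'a"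
  assumes sums: "\<forall>x::'a. \<exists>us. (\<forall>u\<in>set us. u dvd 1) \<and> x = sum_list us"
    and \<phi>: "additive \<phi>" "inj \<phi>"
    and compat: "\<And>u. u dvd 1 \<Longrightarrow> \<Phi> u * \<phi> 1 = \<phi> u"
  obtains \<Psi> where "additive \<Psi>" "inj \<Psi>" "\<And>u. u dvd 1 \<Longrightarrow> \<Psi> u = \<Phi> u"
proof -
  \<comment> \<open>\<open>c\<close> stays opaque so that the equation \<open>\<phi> x = c * \<Psi> x\<close> is a terminating rewrite rule.\<close>
  define c where "c = \<phi> 1"
  have "\<phi> 1 \<noteq> \<phi> 0"
    using \<phi>(2) by (simp add: inj_eq)
  then have c_nonzero: "c \<noteq> 0"
    by (simp add: c_def additive.zero[OF \<phi>(1)])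
  have "\<forall>x. \<exists>y. \<phi> x = c * y"
    using image_one_dvd_additive[OF sums \<phi>(1) compat] by (auto simp: c_def dvd_def)
  then obtain \<Psi> where \<Psi>: "\<And>x. \<phi> x = c * \<Psi> x"
    by metis
  have "additive \<Psi>"
  proof
    fix x y
    have "c * \<Psi> (x + y) = c * (\<Psi> x + \<Psi> y)"
      using additive.add[OF \<phi>(1), of x y] by (simp add: \<Psi> distrib_left)
    then show "\<Psi> (x + y) = \<Psi> x + \<Psi> y"
      using c_nonzero by simp
  qed
  moreover have "inj \<Psi>"
    using \<phi>(2) by (metis \<Psi> injD injI)
  moreover have "\<Psi> u = \<Phi> u" if "u dvd 1" for u
  proof -
    have "c * \<Psi> u = c * \<Phi> u"
      using \<Psi>[of u] compat[OF that] unfolding c_def by (metis mult.commute)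
    then show ?thesis
      using c_nonzero by simp
  qed
  ultimately show ?thesis
    using that by blast
qed

theorem mainTheorem14:
  fixes \<phi> :: "'a::idom \<Rightarrow> 'a" and \<Phi> :: "'a \<Rightarrow> 'a"
  assumes sum_units: "\<forall>x::'a. \<exists>us. (\<forall>u\<in>set us. u dvd 1) \<and> x = sum_list us"
    and \<phi>_bij: "bij \<phi>"
    and \<phi>_add: "\<forall>x y. \<phi> (x + y) = \<phi> x + \<phi> y"
    and \<Phi>_bij: "bij_betw \<Phi> {u. u dvd 1} {u. u dvd 1}"
    and \<Phi>_mult: "\<forall>u v. u dvd 1 \<longrightarrow> v dvd 1 \<longrightarrow> \<Phi> (u * v) = \<Phi> u * \<Phi> v"
    and compat: "\<forall>u. u dvd 1 \<longrightarrow> \<Phi> u * \<phi> 1 = \<phi> u"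
  shows "\<exists>\<Psi>::'a \<Rightarrow> 'a. bij \<Psi> \<and> (\<forall>x y. \<Psi> (x + y) = \<Psi> x + \<Psi> y)
            \<and> (\<forall>x y. \<Psi> (x * y) = \<Psi> x * \<Psi> y) \<and> \<Psi> 1 = 1
            \<and> (\<forall>u. u dvd 1 \<longrightarrow> \<Psi> u = \<Phi> u)"
proof -
  have \<phi>: "additive \<phi>"
    using \<phi>_add by (simp add: additive_def)
  obtain \<Psi> where \<Psi>_add: "additive \<Psi>" and "inj \<Psi>"
    and \<Psi>_units: "\<And>u. u dvd 1 \<Longrightarrow> \<Psi> u = \<Phi> u"
    using obtain_additive_extension_of_units[OF sum_units \<phi> bij_is_inj[OF \<phi>_bij]] compat
    by blast
  have "\<Psi> ` {u. u dvd 1} = \<Phi> ` {u. u dvd 1}"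
    using \<Psi>_units by (intro image_cong) auto
  also have "\<dots> = {u. u dvd 1}"
    using \<Phi>_bij by (rule bij_betw_imp_surj_on)
  finally have "surj \<Psi>"
    by (intro additive_surj_if_units_in_range[OF sum_units \<Psi>_add]) (metis image_mono subset_UNIV)
  have \<Psi>_mult: "\<Psi> (x * y) = \<Psi> x * \<Psi> y" for x y
    using sum_units \<Psi>_add
  proof (rule additive_mult_if_mult_on_units)
    fix u v :: 'a
    assume "u dvd 1" "v dvd 1"
    with mult_dvd_mono[OF this] show "\<Psi> (u * v) = \<Psi> u * \<Psi> v"
      using \<Psi>_units \<Phi>_mult by simp
  qed
  have "\<Phi> 1 = 1"
  proof (rule unit_idempotent_eq_one)
    show "\<Phi> 1 dvd 1"
      using bij_betwE[OF \<Phi>_bij] by simp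
    show "\<Phi> 1 * \<Phi> 1 = \<Phi> 1"
      using \<Phi>_mult[rule_format, of 1 1] by simp
  qed
  show ?thesis
  proof (intro exI[of _ \<Psi>] conjI allI impI)
    show "bij \<Psi>"
      using \<open>inj \<Psi>\<close> \<open>surj \<Psi>\<close> by (rule bijI)
  qed (simp_all add: additive.add[OF \<Psi>_add] \<Psi>_mult \<Psi>_units \<open>\<Phi> 1 = 1\<close>)
qed

end
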